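(* Let $E$ be a regular biordered set satisfying (E1), (E2), (E3) below, let $e,f\in E$ with $f\,\omega\,e'$, and let $h=e\oplus f$. Then: (i) $e\,\omega\,h$ and $f\,\omega\,h$; (ii) if $g\in E$ satisfies $e\,\omega^l\,g$ and $f\,\omega^l\,g$, then $h\,\omega^l\,g$; (iii) if $g\in E$ satisfies $e\,\omega^r\,g$ and $f\,\omega^r\,g$, then $h\,\omega^r\,g$. Moreover, $h$ is the unique element of $E$ satisfying (i)–(iii). Conditions: (E1) there exists $0\in E$ with $0\,\omega\,x$ for every $x\in E$; (E2) there is a map $x\mapsto x'$ on $E$ such that for all $x,y\in E$: $(x')'=x$; $y\,\omega^l\,x$ iff $x'\,\omega^r\,y'$; $y\,\omega^l\,x'$ iff $M(y,x)=\{0\}$; (E3) for all $x,y\in E$, if $y\,\omega\,x'$ then $S(x',y')\cap S(y',x')\ne\emptyset$.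
   Context: A regular biordered set is a partial algebra isomorphic to the set of idempotents $E(S)$ of a regular semigroup $S$ (regular: every $x$ has $y$ with $xyx=x$), where $ef$ (computed in $S$) is defined when $\{ef,fe\}\cap\{e,f\}\ne\emptyset$. In $E$: $\omega^l=\{(e,f): ef=e\}$, $\omega^r=\{(e,f): fe=e\}$, $\omega=\omega^l\cap\omega^r$; $M(e,f)=\{g\in E: g\,\omega^l\,e,\ g\,\omega^r\,f\}$; for $g,h\in M(e,f)$, $g\preceq h$ iff $eg\,\omega^r\,eh$ and $gf\,\omega^l\,hf$; $S(e,f)=\{h\in M(e,f): g\preceq h\text{ for all }g\in M(e,f)\}$. Under (E1)–(E3), for $f\,\omega\,e'$ the set $S(e',f')\cap S(f',e')$ has exactly one element $k$, and $e\oplus f$ is defined to be $k'$. *)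

theory Defs
  imports Main
begin

text \<open>The regular biordered set is realised concretely as the set of idempotents
of a regular semigroup (the carrier is the whole type, of class semigroup_mult).\<close>

definition regular_semigroup :: "'a::semigroup_mult itself \<Rightarrow> bool" where
  "regular_semigroup _ \<longleftrightarrow> (\<forall>x::'a. \<exists>y. x * y * x = x)"

definition Idem :: "'a::semigroup_mult set" where
  "Idem = {e. e * e = e}"

definition omega_l :: "'a::semigroup_mult \<Rightarrow> 'a \<Rightarrow> bool" where
  "omega_l e f \<longleftrightarrow> e * f = e"

definition omega_r :: "'a::semigroup_mult \<Rightarrow> 'a \<Rightarrow> bool" where
  "omega_r e f \<longleftrightarrow> f * e = e"

definition omega :: "'a::semigroup_mult \<Rightarrow> 'a \<Rightarrow> bool" where
  "omega e f \<longleftrightarrow> omega_l e f \<and> omega_r e f"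

definition Mset :: "'a::semigroup_mult \<Rightarrow> 'a \<Rightarrow> 'a set" where
  "Mset e f = {g \<in> Idem. omega_l g e \<and> omega_r g f}"

definition sand_pre :: "'a::semigroup_mult \<Rightarrow> 'a \<Rightarrow> 'a \<Rightarrow> 'a \<Rightarrow> bool" where
  "sand_pre e f g h \<longleftrightarrow> omega_r (e * g) (e * h) \<and> omega_l (g * f) (h * f)"

definition Sset :: "'a::semigroup_mult \<Rightarrow> 'a \<Rightarrow> 'a set" where
  "Sset e f = {h \<in> Mset e f. \<forall>g \<in> Mset e f. sand_pre e f g h}"

text \<open>(E1) with the zero z, (E2) with the map c (written x'), (E3).\<close>
definition E123 :: "'a::semigroup_mult \<Rightarrow> ('a \<Rightarrow> 'a) \<Rightarrow> bool" where
  "E123 z c \<longleftrightarrow>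
     z \<in> Idem \<and> (\<forall>x \<in> Idem. omega z x) \<and>
     (\<forall>x \<in> Idem. c x \<in> Idem) \<and>
     (\<forall>x \<in> Idem. \<forall>y \<in> Idem.
        c (c x) = x \<and>
        (omega_l y x \<longleftrightarrow> omega_r (c x) (c y)) \<and>
        (omega_l y (c x) \<longleftrightarrow> Mset y x = {z})) \<and>
     (\<forall>x \<in> Idem. \<forall>y \<in> Idem. omega y (c x) \<longrightarrow>
        Sset (c x) (c y) \<inter> Sset (c y) (c x) \<noteq> {})"

definition oplus :: "('a::semigroup_mult \<Rightarrow> 'a) \<Rightarrow> 'a \<Rightarrow> 'a \<Rightarrow> 'a" where
  "oplus c e f = c (THE k. k \<in> Sset (c e) (c f) \<inter> Sset (c f) (c e))"

end

theory Submission
  imports Defs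
begin

text \<open>The map \<open>x \<mapsto> x'\<close> is an involution of \<open>E\<close> exchanging \<open>\<omega>\<^sup>l\<close> and the
  converse of \<open>\<omega>\<^sup>r\<close>. Hence \<open>h = k'\<close> lies \<open>\<omega>\<close>-above \<open>e\<close> and \<open>f\<close> exactly when \<open>k\<close>
  lies \<open>\<omega>\<close>-below \<open>e'\<close> and \<open>f'\<close>, which holds for \<open>k \<in> M(e',f') \<inter> M(f',e')\<close>.
  For leastness, an upper bound \<open>g\<close> turns into a common lower bound \<open>g'\<close>, and then
  \<open>g' e'\<close> (resp. \<open>e' g'\<close>) is a sandwich element that the maximal sandwich element \<open>k\<close>
  must dominate; this forces \<open>g'\<close> below \<open>k\<close>. Uniqueness holds because two elements
  with (i)--(iii) lie \<open>\<omega>\<^sup>l\<close>- and \<open>\<omega>\<^sup>r\<close>-below each other.\<close>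

definition is_omega_join :: "'a::semigroup_mult \<Rightarrow> 'a \<Rightarrow> 'a \<Rightarrow> bool" where
  "is_omega_join e f h \<longleftrightarrow> h \<in> Idem \<and> omega e h \<and> omega f h
    \<and> (\<forall>g \<in> Idem. omega_l e g \<and> omega_l f g \<longrightarrow> omega_l h g)
    \<and> (\<forall>g \<in> Idem. omega_r e g \<and> omega_r f g \<longrightarrow> omega_r h g)"

lemma is_omega_join_unique:
  assumes "is_omega_join e f h1" and "is_omega_join e f h2"
  shows "h1 = h2"
proof -
  have "h1 * h2 = h1" "h2 * h1 = h1" "h2 * h1 = h2" "h1 * h2 = h2"
    using assms unfolding is_omega_join_def omega_def omega_l_def omega_r_def by blast+
  then show ?thesis by simp
qed

lemma Mset_Int_omega:
  assumes "k \<in> Mset a b" and "k \<in> Mset b a"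
  shows "omega k a" and "omega k b"
  using assms unfolding Mset_def omega_def by auto

lemma Sset_subset_Mset: "Sset a b \<subseteq> Mset a b"
  unfolding Sset_def by blast

lemma Sset_dominates_omega_r_lower_bound:
  assumes "a \<in> Idem" and "g \<in> Idem" and "k \<in> Sset a b"
    and "omega_r k a" and "omega_r g a" and "omega_r g b"
  shows "omega_r g k"
proof -
  have ak: "a * k = k" and ag: "a * g = g" and bg: "b * g = g"
    using assms(4-6) unfolding omega_r_def by auto
  have aa: "a * a = a" and gg: "g * g = g"
    using assms(1,2) unfolding Idem_def by auto
  define m where "m = g * a"
  have "m * m = m"
    unfolding m_def by (metis ag gg mult.assoc)
  moreover have "m * a = m" and "b * m = m"
    unfolding m_def by (metis aa mult.assoc, metis bg mult.assoc)
  ultimately have "m \<in> Mset a b"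
    unfolding Mset_def Idem_def omega_l_def omega_r_def by blast
  then have "omega_r (a * m) (a * k)"
    using assms(3) unfolding Sset_def sand_pre_def by blast
  moreover have "a * m = m"
    unfolding m_def by (metis ag mult.assoc)
  ultimately have "k * m = m"
    unfolding omega_r_def by (simp add: ak)
  then have "k * (g * a) * g = g * a * g"
    unfolding m_def by simp
  then show ?thesis
    unfolding omega_r_def by (simp add: mult.assoc ag gg)
qed

lemma Sset_dominates_omega_l_lower_bound:
  assumes "a \<in> Idem" and "g \<in> Idem" and "k \<in> Sset b a"
    and "omega_l k a" and "omega_l g a" and "omega_l g b"
  shows "omega_l g k"
proof -
  have ka: "k * a = k" and ga: "g * a = g" and gb: "g * b = g"
    using assms(4-6) unfolding omega_l_def by auto
  have aa: "a * a = a" and gg: "g * g = g"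
    using assms(1,2) unfolding Idem_def by auto
  define m where "m = a * g"
  have "m * m = m"
    unfolding m_def by (metis ga gg mult.assoc)
  moreover have "m * b = m" and "a * m = m"
    unfolding m_def by (metis gb mult.assoc, metis aa mult.assoc)
  ultimately have "m \<in> Mset b a"
    unfolding Mset_def Idem_def omega_l_def omega_r_def by blast
  then have "omega_l (m * a) (k * a)"
    using assms(3) unfolding Sset_def sand_pre_def by blast
  moreover have "m * a = m"
    unfolding m_def by (metis ga mult.assoc)
  ultimately have "m * k = m"
    unfolding omega_l_def by (simp add: ka)
  then have "(g * a) * g * k = (g * a) * g"
    unfolding m_def by (simp add: mult.assoc)
  then show ?thesis
    unfolding omega_l_def by (simp add: ga gg)
qed

lemma
  assumes "E123 z c"
  shows E123_compl_Idem: "x \<in> Idem \<Longrightarrow> c x \<in> Idem"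
    and E123_compl_compl: "x \<in> Idem \<Longrightarrow> c (c x) = x"
    and E123_omega_l_iff: "x \<in> Idem \<Longrightarrow> y \<in> Idem \<Longrightarrow> omega_l y x \<longleftrightarrow> omega_r (c x) (c y)"
    and E123_Sset_Int_nonempty:
      "x \<in> Idem \<Longrightarrow> y \<in> Idem \<Longrightarrow> omega y (c x) \<Longrightarrow> Sset (c x) (c y) \<inter> Sset (c y) (c x) \<noteq> {}"
  using assms unfolding E123_def by blast+

lemma E123_omega_r_iff:
  assumes "E123 z c" and "x \<in> Idem" and "y \<in> Idem"
  shows "omega_r y x \<longleftrightarrow> omega_l (c x) (c y)"
  using E123_omega_l_iff[OF assms(1) E123_compl_Idem[OF assms(1)], of y "c x"] assms
  by (simp add: E123_compl_Idem E123_compl_compl)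

lemma E123_omega_iff:
  assumes "E123 z c" and "x \<in> Idem" and "y \<in> Idem"
  shows "omega y x \<longleftrightarrow> omega (c x) (c y)"
  using E123_omega_l_iff[OF assms] E123_omega_r_iff[OF assms] unfolding omega_def by blast

lemma Sset_Int_compl_is_omega_join:
  assumes E: "E123 z c" and e: "e \<in> Idem" and f: "f \<in> Idem"
    and k: "k \<in> Sset (c e) (c f) \<inter> Sset (c f) (c e)"
  shows "is_omega_join e f (c k)"
proof -
  have kM: "k \<in> Mset (c e) (c f)" "k \<in> Mset (c f) (c e)"
    using k Sset_subset_Mset by blast+
  have kI: "k \<in> Idem" and ckI: "c k \<in> Idem"
    using kM(1) E123_compl_Idem[OF E] unfolding Mset_def by auto
  note compl_Idem = E123_compl_Idem[OF E] and compl_compl = E123_compl_compl[OF E]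
  have upper: "omega x (c k)" if "x \<in> Idem" "omega k (c x)" for x
    using E123_omega_iff[OF E ckI that(1)] that compl_compl kI by simp
  have least_l: "omega_l (c k) g" if g: "g \<in> Idem" "omega_l e g" "omega_l f g" for g
  proof -
    have "omega_r (c g) (c e)" "omega_r (c g) (c f)"
      using g e f E123_omega_l_iff[OF E] by blast+
    then have "omega_r (c g) k"
      using Sset_dominates_omega_r_lower_bound[of "c e" "c g" k "c f"] k Mset_Int_omega(1)[OF kM]
        compl_Idem e g unfolding omega_def by blast
    then show ?thesis
      using E123_omega_l_iff[OF E g(1) ckI] compl_compl kI by simp
  qed
  have least_r: "omega_r (c k) g" if g: "g \<in> Idem" "omega_r e g" "omega_r f g" for g
  proof -
    have "omega_l (c g) (c e)" "omega_l (c g) (c f)"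
      using g e f E123_omega_r_iff[OF E] by blast+
    then have "omega_l (c g) k"
      using Sset_dominates_omega_l_lower_bound[of "c e" "c g" k "c f"] k Mset_Int_omega(1)[OF kM]
        compl_Idem e g unfolding omega_def by blast
    then show ?thesis
      using E123_omega_r_iff[OF E g(1) ckI] compl_compl kI by simp
  qed
  show ?thesis
    unfolding is_omega_join_def
    using ckI upper[OF e] upper[OF f] Mset_Int_omega[OF kM] least_l least_r by blast
qed

lemma oplus_eq_compl:
  assumes E: "E123 z c" and e: "e \<in> Idem" and f: "f \<in> Idem"
    and k: "k \<in> Sset (c e) (c f) \<inter> Sset (c f) (c e)"
  shows "oplus c e f = c k"
proof -
  have unique: "k' = k" if k': "k' \<in> Sset (c e) (c f) \<inter> Sset (c f) (c e)" for k'
  proof -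
    have "k \<in> Idem" "k' \<in> Idem"
      using k k' unfolding Sset_def Mset_def by auto
    moreover have "c k' = c k"
      using is_omega_join_unique Sset_Int_compl_is_omega_join[OF E e f] k k' by blast
    ultimately show ?thesis
      by (metis E123_compl_compl[OF E])
  qed
  have "(THE k. k \<in> Sset (c e) (c f) \<inter> Sset (c f) (c e)) = k"
    using k unique by (rule the_equality)
  then show ?thesis
    unfolding oplus_def by simp
qed

theorem proposition5p3:
  fixes z :: "'a::semigroup_mult" and c :: "'a \<Rightarrow> 'a" and e f :: 'a
  assumes "regular_semigroup TYPE('a)"
    and "E123 z c"
    and "e \<in> Idem" and "f \<in> Idem" and "omega f (c e)"
  defines "h \<equiv> oplus c e f"
  shows "h \<in> Idem \<and> omega e h \<and> omega f h
    \<and> (\<forall>g \<in> Idem. omega_l e g \<and> omega_l f g \<longrightarrow> omega_l h g)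
    \<and> (\<forall>g \<in> Idem. omega_r e g \<and> omega_r f g \<longrightarrow> omega_r h g)
    \<and> (\<forall>h' \<in> Idem. (omega e h' \<and> omega f h'
          \<and> (\<forall>g \<in> Idem. omega_l e g \<and> omega_l f g \<longrightarrow> omega_l h' g)
          \<and> (\<forall>g \<in> Idem. omega_r e g \<and> omega_r f g \<longrightarrow> omega_r h' g))
        \<longrightarrow> h' = h)"
proof -
  obtain k where k: "k \<in> Sset (c e) (c f) \<inter> Sset (c f) (c e)"
    using E123_Sset_Int_nonempty[OF assms(2-5)] by blast
  have "is_omega_join e f h"
    unfolding h_def oplus_eq_compl[OF assms(2-4) k]
    using Sset_Int_compl_is_omega_join[OF assms(2-4) k] .
  moreover have "h' = h" if "is_omega_join e f h'" for h'
    using is_omega_join_unique that calculation by blast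
  ultimately show ?thesis
    unfolding is_omega_join_def by blast
qed

end
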